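(* Let $\mathbf L=(L,\vee,\wedge,0,1)$ be a complemented modular lattice with $0\ne1$. Then the following are equivalent: (i) $x^{++}=\{x\}$ for all $x\in L$; (ii) for every $x\in L$ and every $y\in x^{++}$ there exists some $z\in y^+$ such that either $(x\vee y)\wedge z=0$ or $(x\wedge y)\vee z=1$.
   Context: For $a\in L$, $a^+:=\{x\in L\mid a\vee x=1,\ a\wedge x=0\}$ (the set of all complements of $a$). For $A\subseteq L$, $A^+:=\{x\in L\mid a\vee x=1\text{ and }a\wedge x=0\text{ for all }a\in A\}$, and $a^{++}:=(a^+)^+$. *)

theory Defs
  imports Main
begin

definition modular_lattice :: "'a::bounded_lattice itself \<Rightarrow> bool" where
  "modular_lattice _ \<longleftrightarrow> (\<forall>x y z :: 'a. x \<le> z \<longrightarrow> sup x (inf y z) = inf (sup x y) z)"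

definition complemented_lattice :: "'a::bounded_lattice itself \<Rightarrow> bool" where
  "complemented_lattice _ \<longleftrightarrow> (\<forall>x :: 'a. \<exists>y. sup x y = top \<and> inf x y = bot)"

definition cmpl :: "'a::bounded_lattice \<Rightarrow> 'a set" where
  "cmpl a = {x. sup a x = top \<and> inf a x = bot}"

definition cmplS :: "'a::bounded_lattice set \<Rightarrow> 'a set" where
  "cmplS A = {x. \<forall>a\<in>A. sup a x = top \<and> inf a x = bot}"

end

theory Submission
  imports Defs
begin

(* Every element y of x^++ is a complement of some complement of x. In a modular lattice
   two comparable elements with a common complement coincide, so (i) holds as soon as every
   such y is comparable with x. Condition (ii) gives exactly this: if z is a complement of y
   with (x join y) meet z = 0, then y <= x join y share the complement z, whence x <= y;
   dually (x meet y) join z = 1 forces y <= x. *)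

lemma modular_eq_if_le_common_complement:
  fixes a b c :: "'a::bounded_lattice"
  assumes "modular_lattice TYPE('a)" "a \<le> b" "sup a c = top" "inf b c = bot"
  shows "a = b"
proof -
  have "sup a (inf c b) = inf (sup a c) b"
    using assms(1,2) unfolding modular_lattice_def by blast
  then show ?thesis
    using assms(3,4) by (simp add: inf_commute)
qed

lemma self_mem_cmplS_cmpl: "x \<in> cmplS (cmpl x)"
  by (auto simp: cmplS_def cmpl_def sup_commute inf_commute)

lemma cmplS_cmpl_eq_if_comparable:
  fixes x y :: "'a::bounded_lattice"
  assumes "modular_lattice TYPE('a)" "complemented_lattice TYPE('a)"
    and "y \<in> cmplS (cmpl x)" "x \<le> y \<or> y \<le> x"
  shows "y = x"
proof -
  obtain c where c: "sup x c = top" "inf x c = bot"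
    using assms(2) unfolding complemented_lattice_def by blast
  then have "c \<in> cmpl x"
    by (simp add: cmpl_def)
  then have "sup y c = top" "inf y c = bot"
    using assms(3) by (auto simp: cmplS_def sup_commute inf_commute)
  then show ?thesis
    using assms(4) c modular_eq_if_le_common_complement[OF assms(1)] by metis
qed

lemma modular_comparable_if_complement_disjoint_or_codisjoint:
  fixes x y z :: "'a::bounded_lattice"
  assumes "modular_lattice TYPE('a)" "z \<in> cmpl y"
    and "inf (sup x y) z = bot \<or> sup (inf x y) z = top"
  shows "x \<le> y \<or> y \<le> x"
  using assms(3)
proof
  assume disj: "inf (sup x y) z = bot"
  have "sup y z = top"
    using assms(2) by (simp add: cmpl_def)
  then have "y = sup x y"
    using modular_eq_if_le_common_complement[OF assms(1), of y "sup x y" z] disj by simp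
  then show ?thesis
    by (metis sup.cobounded1)
next
  assume codisj: "sup (inf x y) z = top"
  have "inf y z = bot"
    using assms(2) by (simp add: cmpl_def)
  then have "inf x y = y"
    using modular_eq_if_le_common_complement[OF assms(1), of "inf x y" y z] codisj by simp
  then show ?thesis
    by (metis inf.cobounded1)
qed

theorem theorem1:
  assumes "modular_lattice TYPE('a::bounded_lattice)"
    and "complemented_lattice TYPE('a)"
    and "(bot::'a) \<noteq> top"
  shows "(\<forall>x::'a. cmplS (cmpl x) = {x}) \<longleftrightarrow>
         (\<forall>x::'a. \<forall>y\<in>cmplS (cmpl x). \<exists>z\<in>cmpl y.
             inf (sup x y) z = bot \<or> sup (inf x y) z = top)"
proof
  assume singleton: "\<forall>x::'a. cmplS (cmpl x) = {x}"
  show "\<forall>x::'a. \<forall>y\<in>cmplS (cmpl x). \<exists>z\<in>cmpl y.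
          inf (sup x y) z = bot \<or> sup (inf x y) z = top"
  proof (intro allI ballI)
    fix x y :: 'a
    assume "y \<in> cmplS (cmpl x)"
    then have "y = x"
      using singleton by auto
    moreover obtain z where "sup x z = top" "inf x z = bot"
      using assms(2) unfolding complemented_lattice_def by blast
    ultimately show "\<exists>z\<in>cmpl y. inf (sup x y) z = bot \<or> sup (inf x y) z = top"
      by (auto simp: cmpl_def)
  qed
next
  assume witness: "\<forall>x::'a. \<forall>y\<in>cmplS (cmpl x). \<exists>z\<in>cmpl y.
          inf (sup x y) z = bot \<or> sup (inf x y) z = top"
  have "y = x" if "y \<in> cmplS (cmpl x)" for x y :: 'a
    using that witness cmplS_cmpl_eq_if_comparable[OF assms(1,2)]
      modular_comparable_if_complement_disjoint_or_codisjoint[OF assms(1)] by metis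
  then show "\<forall>x::'a. cmplS (cmpl x) = {x}"
    using self_mem_cmplS_cmpl by blast
qed

end
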